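(* Assume the standing conventions of the context. (i) If $m'=m+1$, $Z'$ is regular and $D_Z=\{Z'\}$, then $Z$ is regular. (ii) If $m'=m$, $Z$ is regular and $D_{Z'}=\{Z\}$, then $Z'$ is regular.
   Context: A symbol is an array $\Lambda=\binom{a'_1,\ldots,a'_{m_1}}{b'_1,\ldots,b'_{m_2}}$ of two strictly decreasing finite sequences of nonnegative integers (top row, bottom row); its defect is $\mathrm{def}(\Lambda)=m_1-m_2$. Standing assumptions: $Z=\binom{a_1,\ldots,a_{m+1}}{b_1,\ldots,b_m}$ is a special symbol of defect $1$, i.e. $a_1\ge b_1\ge a_2\ge b_2\ge\cdots\ge b_m\ge a_{m+1}$; $Z'=\binom{c_1,\ldots,c_{m'}}{d_1,\ldots,d_{m'}}$ is a special symbol of defect $0$, i.e. $c_1\ge d_1\ge c_2\ge d_2\ge\cdots\ge c_{m'}\ge d_{m'}$; and $m'\in\{m,m+1\}$. For a symbol $Y$, $Y_{\mathrm I}$ is the set of entries of $Y$ occurring in exactly one row; $Y$ is regular if no entry occurs in both rows. For $M\subset Z_{\mathrm I}$, $\Lambda_M$ is the symbol obtained from $Z$ by moving every entry of $M$ to the other row (rows re-sorted decreasingly); for $N\subset Z'_{\mathrm I}$, $\Lambda_N$ is obtained from $Z'$ in the same way. $\overline{\mathcal S}_Z=\{\Lambda_M: M\subset Z_{\mathrm I}\}$, $\overline{\mathcal S}_{Z'}=\{\Lambda_N:N\subset Z'_{\mathrm I}\}$; $\mathcal S_{Z,1}$ (resp. $\mathcal S_{Z',0}$) is the set of elements of $\overline{\mathcal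 S}_Z$ of defect $1$ (resp. of $\overline{\mathcal S}_{Z'}$ of defect $0$). Relation $\overline{\mathcal B}^+_{Z,Z'}\subset\overline{\mathcal S}_Z\times\overline{\mathcal S}_{Z'}$: for $\Lambda=\binom{a'_1,\ldots,a'_{m_1}}{b'_1,\ldots,b'_{m_2}}\in\overline{\mathcal S}_Z$ and $\Lambda'=\binom{c'_1,\ldots,c'_{m'_1}}{d'_1,\ldots,d'_{m'_2}}\in\overline{\mathcal S}_{Z'}$, $(\Lambda,\Lambda')\in\overline{\mathcal B}^+_{Z,Z'}$ iff $\mathrm{def}(\Lambda')=1-\mathrm{def}(\Lambda)$ and: if $m'=m$, $a'_i>d'_i\ge a'_{i+1}$ for $1\le i\le m'_2$ and $b'_{i-1}>c'_i\ge b'_i$ for $1\le i\le m'_1$; if $m'=m+1$, $a'_i\ge d'_i>a'_{i+1}$ for $1\le i\le m'_2$ and $b'_{i-1}\ge c'_i>b'_i$ for $1\le i\le m'_1$; here $b'_0=+\infty$ and nonexistent entries $a'_j,b'_j$ beyond the row lengths are $-\infty$. Then $\mathcal D_{Z,Z'}=\overline{\mathcal B}^+_{Z,Z'}\cap(\mathcal S_{Z,1}\times\mathcal S_{Z',0})$, $D_Z=\{\Lambda'\mid (Z,\Lambda')\in\mathcal D_{Z,Z'}\}$ and $D_{Z'}=\{\Lambda\mid(\Lambda,Z')\in\mathcal D_{Z,Z'}\}$. *)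

theory Defs
  imports Main "HOL-Library.Extended_Real"
begin

text \<open>A symbol is a pair (top row, bottom row) of lists of naturals, both
  strictly decreasing.\<close>
type_synonym symbol = "nat list \<times> nat list"

definition is_symbol :: "symbol \<Rightarrow> bool" where
  "is_symbol L \<longleftrightarrow> sorted_wrt (>) (fst L) \<and> sorted_wrt (>) (snd L)"

definition defect :: "symbol \<Rightarrow> int" where
  "defect L = int (length (fst L)) - int (length (snd L))"

definition special1 :: "symbol \<Rightarrow> nat \<Rightarrow> bool" where
  "special1 Z m \<longleftrightarrow> is_symbol Z \<and> length (fst Z) = m + 1 \<and> length (snd Z) = m \<and>
     (\<forall>i<m. snd Z ! i \<le> fst Z ! i \<and> fst Z ! (i+1) \<le> snd Z ! i)"

definition special0 :: "symbol \<Rightarrow> nat \<Rightarrow> bool" where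
  "special0 Z m' \<longleftrightarrow> is_symbol Z \<and> length (fst Z) = m' \<and> length (snd Z) = m' \<and>
     (\<forall>i<m'. snd Z ! i \<le> fst Z ! i) \<and> (\<forall>i. i + 1 < m' \<longrightarrow> fst Z ! (i+1) \<le> snd Z ! i)"

definition singles :: "symbol \<Rightarrow> nat set" where
  "singles L = (set (fst L) - set (snd L)) \<union> (set (snd L) - set (fst L))"

definition regular :: "symbol \<Rightarrow> bool" where
  "regular L \<longleftrightarrow> set (fst L) \<inter> set (snd L) = {}"

definition desc_list :: "nat set \<Rightarrow> nat list" where
  "desc_list S = rev (sorted_list_of_set S)"

definition move :: "symbol \<Rightarrow> nat set \<Rightarrow> symbol" where
  "move L M = (desc_list ((set (fst L) - M) \<union> (set (snd L) \<inter> M)),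
               desc_list ((set (snd L) - M) \<union> (set (fst L) \<inter> M)))"

definition Sbar :: "symbol \<Rightarrow> symbol set" where
  "Sbar L = {move L M | M. M \<subseteq> singles L}"

definition Sdef :: "symbol \<Rightarrow> int \<Rightarrow> symbol set" where
  "Sdef L d = {\<Lambda> \<in> Sbar L. defect \<Lambda> = d}"

text \<open>1-based entry of a row; nonexistent entries are -infinity.\<close>
definition ent :: "nat list \<Rightarrow> nat \<Rightarrow> ereal" where
  "ent xs i = (if 1 \<le> i \<and> i \<le> length xs then ereal (real (xs ! (i - 1))) else -\<infinity>)"

definition ent0 :: "nat list \<Rightarrow> nat \<Rightarrow> ereal" where
  "ent0 xs i = (if i = 0 then \<infinity> else ent xs i)"

definition Bplus :: "nat \<Rightarrow> nat \<Rightarrow> symbol \<Rightarrow> symbol \<Rightarrow> symbol \<Rightarrow> symbol \<Rightarrow> bool" where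
  "Bplus m m' Z Z' \<Lambda> \<Lambda>' \<longleftrightarrow>
     \<Lambda> \<in> Sbar Z \<and> \<Lambda>' \<in> Sbar Z' \<and> defect \<Lambda>' = 1 - defect \<Lambda> \<and>
     (let a = fst \<Lambda>; b = snd \<Lambda>; c = fst \<Lambda>'; d = snd \<Lambda>' in
      if m' = m then
        (\<forall>i. 1 \<le> i \<and> i \<le> length d \<longrightarrow> ent a i > ent d i \<and> ent d i \<ge> ent a (i+1)) \<and>
        (\<forall>i. 1 \<le> i \<and> i \<le> length c \<longrightarrow> ent0 b (i-1) > ent c i \<and> ent c i \<ge> ent b i)
      else if m' = m + 1 then
        (\<forall>i. 1 \<le> i \<and> i \<le> length d \<longrightarrow> ent a i \<ge> ent d i \<and> ent d i > ent a (i+1)) \<and>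
        (\<forall>i. 1 \<le> i \<and> i \<le> length c \<longrightarrow> ent0 b (i-1) \<ge> ent c i \<and> ent c i > ent b i)
      else False)"

definition Drel :: "nat \<Rightarrow> nat \<Rightarrow> symbol \<Rightarrow> symbol \<Rightarrow> (symbol \<times> symbol) set" where
  "Drel m m' Z Z' = {(\<Lambda>, \<Lambda>'). Bplus m m' Z Z' \<Lambda> \<Lambda>' \<and> \<Lambda> \<in> Sdef Z 1 \<and> \<Lambda>' \<in> Sdef Z' 0}"

definition D_Z :: "nat \<Rightarrow> nat \<Rightarrow> symbol \<Rightarrow> symbol \<Rightarrow> symbol set" where
  "D_Z m m' Z Z' = {\<Lambda>'. (Z, \<Lambda>') \<in> Drel m m' Z Z'}"

definition D_Z' :: "nat \<Rightarrow> nat \<Rightarrow> symbol \<Rightarrow> symbol \<Rightarrow> symbol set" where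
  "D_Z' m m' Z Z' = {\<Lambda>. (\<Lambda>, Z') \<in> Drel m m' Z Z'}"

end

theory Submission
  imports Defs "HOL-Combinatorics.Transposition"
begin

text \<open>Reading a symbol column by column, \<open>a\<^sub>1, b\<^sub>1, a\<^sub>2, b\<^sub>2, \<dots>\<close>, gives its
  interleaving. A symbol is special when its interleaving is weakly decreasing, and a special symbol
  is regular exactly when no two neighbours of its interleaving coincide. In terms of interleavings
  the relation \<open>B\<^sup>+\<close> says that the interleaving \<open>e\<close> of one symbol interlaces the
  interleaving \<open>z\<close> of the other: \<open>z (k + 1) < e k \<le> z (k - 1)\<close>.

  In (i) let \<open>e\<close>, \<open>z\<close> be the interleavings of \<open>Z'\<close>, \<open>Z\<close>. If \<open>Z'\<close> is regular then
  \<open>e\<close> is strictly decreasing; if \<open>Z\<close> is not, then \<open>z j = z (j + 1)\<close> for some \<open>j\<close>, so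
  \<open>e (j + 1) \<le> z (j + 1)\<close>. At the largest \<open>k\<close> with \<open>e k \<le> z k\<close>, exchanging \<open>e k\<close> and
  \<open>e (k + 1)\<close> still interlaces \<open>z\<close>. For symbols this exchange moves the two entries to the
  other row, which gives a second element of \<open>D\<^sub>Z\<close> besides \<open>Z'\<close>. Part (ii) is the same
  argument with the roles of \<open>Z\<close> and \<open>Z'\<close> exchanged.\<close>

definition interleave :: "symbol \<Rightarrow> nat \<Rightarrow> nat" where
  "interleave L k = (if even k then fst L ! (k div 2) else snd L ! (k div 2))"

lemma interleave_even [simp]: "interleave L (2 * p) = fst L ! p"
  by (simp add: interleave_def)

lemma interleave_odd [simp]: "interleave L (Suc (2 * p)) = snd L ! p"
  by (simp add: interleave_def)

lemma interleave_Suc_Suc_even [simp]: "interleave L (Suc (Suc (2 * p))) = fst L ! Suc p"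
  using interleave_even[of L "Suc p"] by simp

definition sized :: "symbol \<Rightarrow> nat \<Rightarrow> bool" where
  "sized L N \<longleftrightarrow> length (fst L) = (N + 1) div 2 \<and> length (snd L) = N div 2"

definition deinterleave :: "(nat \<Rightarrow> nat) \<Rightarrow> nat \<Rightarrow> symbol" where
  "deinterleave f N =
     (map (\<lambda>p. f (2 * p)) [0..<(N + 1) div 2], map (\<lambda>p. f (Suc (2 * p))) [0..<N div 2])"

lemma sized_deinterleave: "sized (deinterleave f N) N"
  by (simp add: sized_def deinterleave_def)

lemma interleave_deinterleave: "i < N \<Longrightarrow> interleave (deinterleave f N) i = f i"
  by (cases "even i") (auto simp: interleave_def deinterleave_def elim!: evenE oddE)

lemma defect_sized: "sized L N \<Longrightarrow> sized L' N \<Longrightarrow> defect L' = defect L"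
  by (simp add: sized_def defect_def)

lemma set_fst_interleave: "sized L N \<Longrightarrow> set (fst L) = interleave L ` {i. i < N \<and> even i}"
proof (intro set_eqI iffI)
  fix x assume "sized L N" "x \<in> set (fst L)"
  then obtain p where "p < (N + 1) div 2" "x = fst L ! p" by (auto simp: sized_def in_set_conv_nth)
  then show "x \<in> interleave L ` {i. i < N \<and> even i}"
    by (intro image_eqI[of _ _ "2 * p"]) auto
qed (auto simp: sized_def elim!: evenE)

lemma set_snd_interleave: "sized L N \<Longrightarrow> set (snd L) = interleave L ` {i. i < N \<and> odd i}"
proof (intro set_eqI iffI)
  fix x assume "sized L N" "x \<in> set (snd L)"
  then obtain p where "p < N div 2" "x = snd L ! p" by (auto simp: sized_def in_set_conv_nth)
  then show "x \<in> interleave L ` {i. i < N \<and> odd i}"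
    by (intro image_eqI[of _ _ "Suc (2 * p)"]) auto
qed (auto simp: sized_def elim!: oddE)

lemma set_fst_deinterleave: "set (fst (deinterleave f N)) = f ` {i. i < N \<and> even i}"
  unfolding set_fst_interleave[OF sized_deinterleave]
  by (rule image_cong) (simp_all add: interleave_deinterleave)

lemma set_snd_deinterleave: "set (snd (deinterleave f N)) = f ` {i. i < N \<and> odd i}"
  unfolding set_snd_interleave[OF sized_deinterleave]
  by (rule image_cong) (simp_all add: interleave_deinterleave)

lemma is_symbol_deinterleave:
  assumes "\<And>i j. i + 2 \<le> j \<Longrightarrow> j < N \<Longrightarrow> f j < f i"
  shows "is_symbol (deinterleave f N)"
  using assms by (auto simp: is_symbol_def deinterleave_def sorted_wrt_iff_nth_less)

lemma desc_list_set: "sorted_wrt (>) xs \<Longrightarrow> desc_list (set xs) = xs"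
proof -
  assume "sorted_wrt (>) xs"
  then have "sorted_wrt (<) (rev xs)" by (simp add: sorted_wrt_rev)
  then have "sorted (rev xs)" "distinct (rev xs)" by (simp_all add: strict_sorted_iff)
  then show ?thesis
    by (metis desc_list_def rev_rev_ident set_rev sorted_list_of_set_sort_remdups
        distinct_remdups_id sorted_sort_id)
qed

lemma transpose_Suc_less: "Suc k < N \<Longrightarrow> i < N \<Longrightarrow> transpose k (Suc k) i < N"
  by (auto simp: transpose_def)

lemma transpose_Suc_strict_mono: "i + 2 \<le> j \<Longrightarrow> transpose k (Suc k) i < transpose k (Suc k) j"
  by (auto simp: transpose_def)

lemma transpose_Suc_image:
  assumes "Suc k < N" and "P k \<longleftrightarrow> \<not> P (Suc k)"
  shows "transpose k (Suc k) ` {i. i < N \<and> P i}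
           = {i. i < N \<and> P i} - {k, Suc k} \<union> ({i. i < N \<and> \<not> P i} \<inter> {k, Suc k})"
  using assms by (auto simp: transpose_def image_iff)

lemma move_adjacent:
  assumes L: "sized L N" and dec: "strict_antimono_on {..<N} (interleave L)" and k: "Suc k < N"
  shows "move L {interleave L k, interleave L (Suc k)}
           = deinterleave (interleave L \<circ> transpose k (Suc k)) N" (is "move L ?M = ?L'")
proof -
  let ?f = "interleave L" and ?t = "transpose k (Suc k)" and ?K = "{k, Suc k}"
  have inj: "inj_on ?f {..<N}"
    using dec strict_antimono_iff_antimono by blast
  have image_swap: "?f ` (B - ?K \<union> (C \<inter> ?K)) = ?f ` B - ?M \<union> (?f ` C \<inter> ?M)"
    if "B \<subseteq> {..<N}" "C \<subseteq> {..<N}" for B C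
    using that k inj by (auto simp: image_Un inj_on_image_set_diff inj_on_image_Int dest: inj_onD)
  have fst_L': "set (fst ?L') = set (fst L) - ?M \<union> (set (snd L) \<inter> ?M)"
  proof -
    have "set (fst ?L') = ?f ` ?t ` {i. i < N \<and> even i}"
      by (simp only: set_fst_deinterleave image_comp)
    also have "\<dots> = set (fst L) - ?M \<union> (set (snd L) \<inter> ?M)"
      by (simp add: transpose_Suc_image[OF k] set_fst_interleave[OF L] set_snd_interleave[OF L]
          image_swap subset_eq)
    finally show ?thesis .
  qed
  have snd_L': "set (snd ?L') = set (snd L) - ?M \<union> (set (fst L) \<inter> ?M)"
  proof -
    have "set (snd ?L') = ?f ` ?t ` {i. i < N \<and> odd i}"
      by (simp only: set_snd_deinterleave image_comp)
    also have "\<dots> = set (snd L) - ?M \<union> (set (fst L) \<inter> ?M)"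
      by (simp add: transpose_Suc_image[OF k] set_fst_interleave[OF L] set_snd_interleave[OF L]
          image_swap subset_eq)
    finally show ?thesis .
  qed
  have "is_symbol ?L'"
  proof (rule is_symbol_deinterleave)
    fix i j assume "i + 2 \<le> j" "j < N"
    then show "(?f \<circ> ?t) j < (?f \<circ> ?t) i"
      using dec transpose_Suc_less[OF k] transpose_Suc_strict_mono
      by (simp add: monotone_on_def)
  qed
  then show ?thesis
    unfolding move_def fst_L'[symmetric] snd_L'[symmetric] by (simp add: is_symbol_def desc_list_set)
qed

lemma deinterleave_transpose_in_Sbar:
  assumes L: "sized L N" and reg: "regular L" and dec: "strict_antimono_on {..<N} (interleave L)"
    and k: "Suc k < N"
  shows "deinterleave (interleave L \<circ> transpose k (Suc k)) N \<in> Sbar L"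
proof -
  have "{interleave L k, interleave L (Suc k)} \<subseteq> set (fst L) \<union> set (snd L)"
    using k by (auto simp: set_fst_interleave[OF L] set_snd_interleave[OF L])
  also have "\<dots> = singles L"
    using reg by (auto simp: singles_def regular_def)
  finally show ?thesis
    unfolding Sbar_def move_adjacent[OF L dec k, symmetric] by blast
qed

lemma deinterleave_transpose_neq:
  assumes L: "sized L N" and dec: "strict_antimono_on {..<N} (interleave L)" and k: "Suc k < N"
  shows "deinterleave (interleave L \<circ> transpose k (Suc k)) N \<noteq> L"
proof
  assume eq: "deinterleave (interleave L \<circ> transpose k (Suc k)) N = L"
  have "interleave L (Suc k) < interleave L k"
    using dec k by (simp add: monotone_on_def)
  then show False
    using interleave_deinterleave[of k N "interleave L \<circ> transpose k (Suc k)"] k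
    by (simp add: eq)
qed

lemma antimono_on_lessThanI:
  fixes f :: "nat \<Rightarrow> 'a::order"
  assumes "\<And>i. Suc i < N \<Longrightarrow> f (Suc i) \<le> f i"
  shows "antimono_on {..<N} f"
proof (rule monotone_onI)
  fix i j assume "i \<in> {..<N}" "j \<in> {..<N}" "i \<le> j"
  then show "f j \<le> f i"
  proof (induction j)
    case (Suc j)
    then show ?case
      using assms by (cases "i = Suc j") (auto intro: order_trans)
  qed simp
qed

lemma antimono_on_lessThan_eq_Suc:
  fixes f :: "nat \<Rightarrow> 'a::order"
  assumes "antimono_on {..<N} f" "i < j" "j < N" "f j = f i"
  shows "f (Suc i) = f i"
proof (rule antisym)
  show "f (Suc i) \<le> f i" "f i \<le> f (Suc i)"
    using assms monotone_onD[OF assms(1), of i "Suc i"] monotone_onD[OF assms(1), of "Suc i" j]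
    by auto
qed

lemma strict_antimono_on_lessThanI:
  fixes f :: "nat \<Rightarrow> 'a::order"
  assumes "antimono_on {..<N} f" "\<And>i. Suc i < N \<Longrightarrow> f (Suc i) \<noteq> f i"
  shows "strict_antimono_on {..<N} f"
proof (rule antimono_imp_strict_antimono[OF assms(1)], rule linorder_inj_onI')
  fix i j assume "i \<in> {..<N}" "j \<in> {..<N}" "i < j"
  then show "f i \<noteq> f j"
    using assms(2)[of i] antimono_on_lessThan_eq_Suc[OF assms(1), of i j] by auto
qed

lemma regular_iff_interleave_adjacent_neq:
  assumes L: "sized L N" and dec: "antimono_on {..<N} (interleave L)"
  shows "regular L \<longleftrightarrow> (\<forall>i. Suc i < N \<longrightarrow> interleave L (Suc i) \<noteq> interleave L i)"
proof
  assume reg: "regular L"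
  show "\<forall>i. Suc i < N \<longrightarrow> interleave L (Suc i) \<noteq> interleave L i"
  proof (intro allI impI notI)
    fix i assume i: "Suc i < N" and eq: "interleave L (Suc i) = interleave L i"
    have "interleave L i \<in> set (fst L) \<and> interleave L (Suc i) \<in> set (snd L)
        \<or> interleave L i \<in> set (snd L) \<and> interleave L (Suc i) \<in> set (fst L)"
      using i by (cases "even i") (auto simp: set_fst_interleave[OF L] set_snd_interleave[OF L])
    then show False
      using reg eq by (auto simp: regular_def)
  qed
next
  assume adj: "\<forall>i. Suc i < N \<longrightarrow> interleave L (Suc i) \<noteq> interleave L i"
  show "regular L"
    unfolding regular_def
  proof (rule ccontr)
    assume "set (fst L) \<inter> set (snd L) \<noteq> {}"
    then obtain p q where "p < N" "q < N" "even p" "odd q" "interleave L p = interleave L q"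
      by (auto simp: set_fst_interleave[OF L] set_snd_interleave[OF L])
    then obtain i j where "i < j" "j < N" "interleave L j = interleave L i"
      by (metis linorder_neqE_nat)
    then show False
      using adj antimono_on_lessThan_eq_Suc[OF dec, of i j] by auto
  qed
qed

definition interlaces :: "(nat \<Rightarrow> nat) \<Rightarrow> (nat \<Rightarrow> nat) \<Rightarrow> nat \<Rightarrow> bool" where
  "interlaces e z N \<longleftrightarrow> (\<forall>k. k + 2 < N \<longrightarrow> z (Suc k) < e k) \<and> (\<forall>k. Suc k < N \<longrightarrow> e (Suc k) \<le> z k)"

lemma interlaces_transpose:
  assumes il: "interlaces e z N" and dec: "strict_antimono_on {..<N} e" and k: "Suc k < N"
    and le: "e k \<le> z k" and gt: "k + 2 = N \<or> z (Suc k) < e (Suc k)"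
  shows "interlaces (e \<circ> transpose k (Suc k)) z N"
  unfolding interlaces_def
proof (intro conjI allI impI)
  have step: "e (Suc k) < e k"
    using dec k by (simp add: monotone_on_def)
  fix i
  show "z (Suc i) < (e \<circ> transpose k (Suc k)) i" if "i + 2 < N"
  proof -
    consider "i = k" | "i = Suc k" | "i \<noteq> k" "i \<noteq> Suc k" by blast
    then show ?thesis
    proof cases
      case 2
      then have "z (Suc i) < e (Suc k)"
        using il that unfolding interlaces_def by blast
      then show ?thesis using 2 step by simp
    qed (use il that gt in \<open>auto simp: interlaces_def\<close>)
  qed
  show "(e \<circ> transpose k (Suc k)) (Suc i) \<le> z i" if "Suc i < N"
  proof -
    consider "Suc i = k" | "i = k" | "Suc i \<noteq> k" "i \<noteq> k" by blast
    then show ?thesis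
    proof cases
      case 1
      then have "e k \<le> z i"
        using il that unfolding interlaces_def by blast
      then show ?thesis using 1 step by simp
    qed (use il that le in \<open>auto simp: interlaces_def\<close>)
  qed
qed

lemma exists_transpose_interlaces:
  assumes il: "interlaces e z N" and dec: "strict_antimono_on {..<N} e"
    and j: "Suc (Suc j) < N" "z (Suc j) = z j"
  shows "\<exists>k. Suc k < N \<and> interlaces (e \<circ> transpose k (Suc k)) z N"
proof -
  let ?S = "{k. Suc k < N \<and> e k \<le> z k}"
  define k where "k = Max ?S"
  have fin: "finite ?S"
    by (rule finite_subset[of _ "{..<N}"]) auto
  have "Suc j \<in> ?S"
    using il j unfolding interlaces_def by auto
  then have k: "k \<in> ?S"
    unfolding k_def using fin by (intro Max_in) auto
  have "z (Suc k) < e (Suc k)" if "k + 2 \<noteq> N"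
  proof (rule ccontr)
    assume "\<not> z (Suc k) < e (Suc k)"
    then have "Suc k \<in> ?S" using k that by auto
    then show False
      using Max_ge[OF fin, of "Suc k"] by (simp add: k_def)
  qed
  then show ?thesis
    using interlaces_transpose[OF il dec] k by blast
qed

lemma all_nat_even_odd: "(\<forall>k::nat. P k) \<longleftrightarrow> (\<forall>p. P (2 * p)) \<and> (\<forall>p. P (Suc (2 * p)))"
proof (intro iffI allI conjI)
  fix k assume "(\<forall>p. P (2 * p)) \<and> (\<forall>p. P (Suc (2 * p)))"
  then show "P k"
    by (cases "even k") (auto elim: evenE oddE)
qed simp_all

lemma interlaces_iff_rows:
  "interlaces e z N \<longleftrightarrow>
     (\<forall>p. 2 * p + 2 < N \<longrightarrow> z (Suc (2 * p)) < e (2 * p)) \<and>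
     (\<forall>p. 2 * p + 3 < N \<longrightarrow> z (Suc (Suc (2 * p))) < e (Suc (2 * p))) \<and>
     (\<forall>p. 2 * p + 1 < N \<longrightarrow> e (Suc (2 * p)) \<le> z (2 * p)) \<and>
     (\<forall>p. 2 * p + 2 < N \<longrightarrow> e (Suc (Suc (2 * p))) \<le> z (Suc (2 * p)))"
  unfolding interlaces_def all_nat_even_odd[where P = "\<lambda>k. k + 2 < N \<longrightarrow> z (Suc k) < e k"]
    all_nat_even_odd[where P = "\<lambda>k. Suc k < N \<longrightarrow> e (Suc k) \<le> z k"]
  by (simp add: numeral_eq_Suc)

lemma ent_Suc_le_ent_Suc_iff:
  "p < length xs \<Longrightarrow> ent ys (Suc j) \<le> ent xs (Suc p) \<longleftrightarrow> (j < length ys \<longrightarrow> ys ! j \<le> xs ! p)"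
  by (simp add: ent_def)

lemma ent_Suc_less_ent_Suc_iff:
  "p < length xs \<Longrightarrow> ent ys (Suc j) < ent xs (Suc p) \<longleftrightarrow> (j < length ys \<longrightarrow> ys ! j < xs ! p)"
  by (simp add: ent_def)

lemma ent_neq_PInf [simp]: "ent xs i \<noteq> \<infinity>"
  by (simp add: ent_def)

lemma ent0_simps [simp]: "ent0 xs 0 = \<infinity>" "ent0 xs (Suc p) = ent xs (Suc p)"
  by (simp_all add: ent0_def)

lemma all_one_le_le_iff: "(\<forall>i. 1 \<le> i \<and> i \<le> n \<longrightarrow> P i) \<longleftrightarrow> (\<forall>p<n. P (Suc p))"
  by (auto simp: Suc_le_eq) (metis Suc_le_eq Suc_pred')

lemma Bplus_Suc_iff_interlaces:
  assumes L: "sized L (2 * m + 1)" and L': "sized L' (2 * m + 2)"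
  shows "Bplus m (Suc m) Z Z' L L' \<longleftrightarrow> L \<in> Sbar Z \<and> L' \<in> Sbar Z' \<and> defect L' = 1 - defect L \<and>
           interlaces (interleave L') (interleave L) (2 * m + 2)"
proof -
  obtain a b c d where ab: "L = (a, b)" and cd: "L' = (c, d)" by fastforce
  have len: "length a = Suc m" "length b = m" "length c = Suc m" "length d = Suc m"
    using L L' by (simp_all add: ab cd sized_def)
  have d_row: "(\<forall>i. 1 \<le> i \<and> i \<le> length d \<longrightarrow> ent a i \<ge> ent d i \<and> ent d i > ent a (i + 1))
      \<longleftrightarrow> (\<forall>p<Suc m. d ! p \<le> a ! p) \<and> (\<forall>p<m. a ! Suc p < d ! p)"
    unfolding all_one_le_le_iff using len
    by (auto simp: ent_Suc_le_ent_Suc_iff ent_Suc_less_ent_Suc_iff)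
  have c_row: "(\<forall>i. 1 \<le> i \<and> i \<le> length c \<longrightarrow> ent0 b (i - 1) \<ge> ent c i \<and> ent c i > ent b i)
      \<longleftrightarrow> (\<forall>p<m. c ! Suc p \<le> b ! p) \<and> (\<forall>p<m. b ! p < c ! p)"
  proof -
    have "(\<forall>p<Suc m. ent c (Suc p) \<le> ent0 b p) \<longleftrightarrow> (\<forall>p<m. c ! Suc p \<le> b ! p)"
      using len by (simp add: All_less_Suc2 ent_Suc_le_ent_Suc_iff)
    moreover have "(\<forall>p<Suc m. ent b (Suc p) < ent c (Suc p)) \<longleftrightarrow> (\<forall>p<m. b ! p < c ! p)"
      using len by (auto simp: ent_Suc_less_ent_Suc_iff less_Suc_eq)
    ultimately show ?thesis
      unfolding all_one_le_le_iff len by auto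
  qed
  show ?thesis
    unfolding Bplus_def Let_def interlaces_iff_rows ab cd fst_conv snd_conv d_row c_row
    by auto
qed

lemma Bplus_same_iff_interlaces:
  assumes L: "sized L (2 * m + 1)" and L': "sized L' (2 * m)"
  shows "Bplus m m Z Z' L L' \<longleftrightarrow> L \<in> Sbar Z \<and> L' \<in> Sbar Z' \<and> defect L' = 1 - defect L \<and>
           interlaces (interleave L) (interleave L') (2 * m + 1)"
proof -
  obtain a b c d where ab: "L = (a, b)" and cd: "L' = (c, d)" by fastforce
  have len: "length a = Suc m" "length b = m" "length c = m" "length d = m"
    using L L' by (simp_all add: ab cd sized_def)
  have d_row: "(\<forall>i. 1 \<le> i \<and> i \<le> length d \<longrightarrow> ent a i > ent d i \<and> ent d i \<ge> ent a (i + 1))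
      \<longleftrightarrow> (\<forall>p<m. d ! p < a ! p) \<and> (\<forall>p<m. a ! Suc p \<le> d ! p)"
    unfolding all_one_le_le_iff using len
    by (auto simp: ent_Suc_le_ent_Suc_iff ent_Suc_less_ent_Suc_iff)
  have c_row: "(\<forall>i. 1 \<le> i \<and> i \<le> length c \<longrightarrow> ent0 b (i - 1) > ent c i \<and> ent c i \<ge> ent b i)
      \<longleftrightarrow> (\<forall>p. Suc p < m \<longrightarrow> c ! Suc p < b ! p) \<and> (\<forall>p<m. b ! p \<le> c ! p)"
  proof -
    have "(\<forall>p<m. ent c (Suc p) < ent0 b p) \<longleftrightarrow> (\<forall>p. Suc p < m \<longrightarrow> c ! Suc p < b ! p)"
      using len by (cases m) (simp_all add: All_less_Suc2 ent_Suc_less_ent_Suc_iff)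
    moreover have "(\<forall>p<m. ent b (Suc p) \<le> ent c (Suc p)) \<longleftrightarrow> (\<forall>p<m. b ! p \<le> c ! p)"
      using len by (auto simp: ent_Suc_le_ent_Suc_iff)
    ultimately show ?thesis
      unfolding all_one_le_le_iff len by auto
  qed
  show ?thesis
    unfolding Bplus_def Let_def interlaces_iff_rows ab cd fst_conv snd_conv d_row c_row
    by auto
qed

lemma interlaces_cong: "(\<And>i. i < N \<Longrightarrow> e i = e' i) \<Longrightarrow> interlaces e z N \<longleftrightarrow> interlaces e' z N"
  by (simp add: interlaces_def)

lemma sized_special1: "special1 Z m \<Longrightarrow> sized Z (2 * m + 1)"
  by (simp add: special1_def sized_def)

lemma sized_special0: "special0 Z m \<Longrightarrow> sized Z (2 * m)"
  by (simp add: special0_def sized_def)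

lemma antimono_interleave_special1:
  assumes "special1 Z m"
  shows "antimono_on {..<2 * m + 1} (interleave Z)"
proof (rule antimono_on_lessThanI)
  fix i assume "Suc i < 2 * m + 1"
  then show "interleave Z (Suc i) \<le> interleave Z i"
    using assms by (cases "even i") (auto simp: special1_def elim!: evenE oddE)
qed

lemma antimono_interleave_special0:
  assumes "special0 Z m"
  shows "antimono_on {..<2 * m} (interleave Z)"
proof (rule antimono_on_lessThanI)
  fix i assume "Suc i < 2 * m"
  then show "interleave Z (Suc i) \<le> interleave Z i"
    using assms by (cases "even i") (auto simp: special0_def elim!: evenE oddE)
qed

lemma exists_other_interlacing_symbol:
  assumes P: "sized P N" and reg: "regular P" and dec: "antimono_on {..<N} (interleave P)"
    and il: "interlaces (interleave P) z N" and j: "Suc (Suc j) < N" "z (Suc j) = z j"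
  obtains P' where "P' \<in> Sbar P" "P' \<noteq> P" "sized P' N" "interlaces (interleave P') z N"
proof -
  have sdec: "strict_antimono_on {..<N} (interleave P)"
    using strict_antimono_on_lessThanI[OF dec] reg regular_iff_interleave_adjacent_neq[OF P dec]
    by blast
  obtain k where k: "Suc k < N" and il': "interlaces (interleave P \<circ> transpose k (Suc k)) z N"
    using exists_transpose_interlaces[OF il sdec j] by blast
  let ?P' = "deinterleave (interleave P \<circ> transpose k (Suc k)) N"
  show thesis
  proof
    show "?P' \<in> Sbar P" by (rule deinterleave_transpose_in_Sbar[OF P reg sdec k])
    show "?P' \<noteq> P" by (rule deinterleave_transpose_neq[OF P sdec k])
    show "sized ?P' N" by (rule sized_deinterleave)
    show "interlaces (interleave ?P') z N"
      using il' interlaces_cong[of N "interleave ?P'" "interleave P \<circ> transpose k (Suc k)" z]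
        interleave_deinterleave by blast
  qed
qed

lemma regular_of_D_Z_eq_singleton:
  assumes Z: "special1 Z m" and Z': "special0 Z' (Suc m)" and reg': "regular Z'"
    and D: "D_Z m (Suc m) Z Z' = {Z'}"
  shows "regular Z"
proof (rule ccontr)
  assume "\<not> regular Z"
  then obtain j where j: "Suc j < 2 * m + 1" "interleave Z (Suc j) = interleave Z j"
    using regular_iff_interleave_adjacent_neq[OF sized_special1 antimono_interleave_special1, OF Z Z]
    by blast
  have sZ: "sized Z (2 * m + 1)" and sZ': "sized Z' (2 * m + 2)"
    using sized_special1[OF Z] sized_special0[OF Z'] by simp_all
  have "(Z, Z') \<in> Drel m (Suc m) Z Z'"
    using D by (auto simp: D_Z_def)
  then have B: "Bplus m (Suc m) Z Z' Z Z'" and SZ: "Z \<in> Sdef Z 1" and SZ': "Z' \<in> Sdef Z' 0"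
    by (auto simp: Drel_def)
  have il: "interlaces (interleave Z') (interleave Z) (2 * m + 2)"
    using B Bplus_Suc_iff_interlaces[OF sZ sZ'] by blast
  have dec': "antimono_on {..<2 * m + 2} (interleave Z')"
    using antimono_interleave_special0[OF Z'] by simp
  have "Suc (Suc j) < 2 * m + 2"
    using j by simp
  then obtain Z'' where Z'': "Z'' \<in> Sbar Z'" "Z'' \<noteq> Z'" "sized Z'' (2 * m + 2)"
      "interlaces (interleave Z'') (interleave Z) (2 * m + 2)"
    using exists_other_interlacing_symbol[OF sZ' reg' dec' il] j(2) by blast
  have "defect Z'' = defect Z'"
    by (rule defect_sized[OF sZ' Z''(3)])
  then have "Bplus m (Suc m) Z Z' Z Z''" and "Z'' \<in> Sdef Z' 0"
    using B SZ' Z'' by (simp_all add: Bplus_Suc_iff_interlaces[OF sZ sZ']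
        Bplus_Suc_iff_interlaces[OF sZ Z''(3)] Sdef_def)
  then have "Z'' \<in> D_Z m (Suc m) Z Z'"
    using SZ by (simp add: D_Z_def Drel_def)
  then show False
    using D Z''(2) by simp
qed

lemma regular_of_D_Z'_eq_singleton:
  assumes Z: "special1 Z m" and Z': "special0 Z' m" and reg: "regular Z"
    and D: "D_Z' m m Z Z' = {Z}"
  shows "regular Z'"
proof (rule ccontr)
  assume "\<not> regular Z'"
  then obtain j where j: "Suc j < 2 * m" "interleave Z' (Suc j) = interleave Z' j"
    using regular_iff_interleave_adjacent_neq[OF sized_special0 antimono_interleave_special0, OF Z' Z']
    by blast
  have sZ: "sized Z (2 * m + 1)" and sZ': "sized Z' (2 * m)"
    using sized_special1[OF Z] sized_special0[OF Z'] .
  have "(Z, Z') \<in> Drel m m Z Z'"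
    using D by (auto simp: D_Z'_def)
  then have B: "Bplus m m Z Z' Z Z'" and SZ: "Z \<in> Sdef Z 1" and SZ': "Z' \<in> Sdef Z' 0"
    by (auto simp: Drel_def)
  have il: "interlaces (interleave Z) (interleave Z') (2 * m + 1)"
    using B Bplus_same_iff_interlaces[OF sZ sZ'] by blast
  have "Suc (Suc j) < 2 * m + 1"
    using j by simp
  then obtain Z'' where Z'': "Z'' \<in> Sbar Z" "Z'' \<noteq> Z" "sized Z'' (2 * m + 1)"
      "interlaces (interleave Z'') (interleave Z') (2 * m + 1)"
    using exists_other_interlacing_symbol[OF sZ reg antimono_interleave_special1[OF Z] il] j(2)
    by blast
  have "defect Z'' = defect Z"
    by (rule defect_sized[OF sZ Z''(3)])
  then have "Bplus m m Z Z' Z'' Z'" and "Z'' \<in> Sdef Z 1"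
    using B SZ Z'' by (simp_all add: Bplus_same_iff_interlaces[OF sZ sZ']
        Bplus_same_iff_interlaces[OF Z''(3) sZ'] Sdef_def)
  then have "Z'' \<in> D_Z' m m Z Z'"
    using SZ' by (simp add: D_Z'_def Drel_def)
  then show False
    using D Z''(2) by simp
qed

theorem lemma0804:
  fixes Z Z' :: symbol and m m' :: nat
  assumes "special1 Z m" and "special0 Z' m'" and "m' = m \<or> m' = m + 1"
  shows "(m' = m + 1 \<and> regular Z' \<and> D_Z m m' Z Z' = {Z'} \<longrightarrow> regular Z)
       \<and> (m' = m \<and> regular Z \<and> D_Z' m m' Z Z' = {Z} \<longrightarrow> regular Z')"
  using regular_of_D_Z_eq_singleton[OF assms(1), of Z'] regular_of_D_Z'_eq_singleton[OF assms(1), of Z']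
    assms(2) by auto

end
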